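(* Let $A$ be a Banach algebra and $(\pi_1,X,\pi_2)$ a Banach $A$-module such that both module actions $\pi_1$ and $\pi_2$ are Arens regular. Let $D:A\to X^*$ be an inner derivation, i.e. there is $x^*\in X^*$ with $D(a)=\pi_1^*(x^*,a)-\pi_2^{r*r}(a,x^* )$ for all $a\in A$. Then $D$ is weakly compact. Moreover, $D^{**}:(A^{**},\Box)\to X^{***}$ and $D^{**}:(A^{**},\lozenge)\to X^{***}$ are inner derivations; namely, for all $a^{**}\in A^{**}$, $$D^{**}(a^{**})=\pi_1^{****}(x^*,a^{**})-\pi_2^{***r*r}(a^{**},x^* )=\pi_1^{r***r*}(x^*,a^{**})-\pi_2^{r****r}(a^{**},x^* ).$$
   Context: Normed spaces are identified with their canonical images in their second duals (so $X^*\subseteq X^{***}$). For a bounded bilinear map $f:X\times Y\to Z$, the adjoint $f^*:Z^*\times X\to Y^*$ is defined by $\langle f^*(z^*,x),y\rangle=\langle z^*,f(x,y)\rangle$; iterating gives $f^{**}$, $f^{***}:X^{**}\times Y^{**}\to Z^{**}$, $f^{****}$, etc. The flip is $f^r(y,x)=f(x,y)$; superscripts are applied successively left to right. $f$ is Arens regular if $f^{***}=f^{r***r}$. For the multiplication $\pi$ of $A$, the Arens products on $A^{**}$ are $\Box=\pi^{***}$ and $\lozenge=\pi^{r***r}$. A Banach $A$-module $(\pi_1,X,\pi_2)$ consists of a Banach space $X$ and bounded bilinear maps $\pi_1:A\times X\to X$, $\pi_2:X\times A\to X$ with $\pi_1(ab,x)=\pi_1(a,\pi_1(b,x))$, $\pi_2(x,ab)=\pi_2(\pi_2(x,a),b)$,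 $\pi_1(a,\pi_2(x,b))=\pi_2(\pi_1(a,x),b)$. A derivation $D:A\to X^*$ is a bounded linear map with $D(ab)=\pi_1^*(D(a),b)+\pi_2^{r*r}(a,D(b))$. $X^{***}$ is an $(A^{**},\Box)$-module with left action $\pi_2^{***r*r}$ and right action $\pi_1^{****}$, and an $(A^{**},\lozenge)$-module with left action $\pi_2^{r****r}$ and right action $\pi_1^{r***r*}$; a derivation $\Delta$ from $A^{**}$ (with one of these products) into $X^{***}$ is inner if $\Delta(a^{**})=\xi\cdot a^{**}-a^{**}\cdot\xi$ for some $\xi\in X^{***}$, using the corresponding module actions. $D^{**}$ is the second adjoint of $D$. *)

theory Defs
  imports "HOL-Analysis.Analysis"
begin

definition can :: "'b::real_normed_vector \<Rightarrow> (('b \<Rightarrow>\<^sub>L real) \<Rightarrow>\<^sub>L real)" where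
  "can x = Blinfun (\<lambda>f. blinfun_apply f x)"

text \<open>Adjoint of a bilinear map f : X \<times> Y \<rightarrow> Z, giving f* : Z* \<times> X \<rightarrow> Y*.\<close>
definition adj :: "('x \<Rightarrow> 'y::real_normed_vector \<Rightarrow> 'z::real_normed_vector)
    \<Rightarrow> ('z \<Rightarrow>\<^sub>L real) \<Rightarrow> 'x \<Rightarrow> ('y \<Rightarrow>\<^sub>L real)" where
  "adj f zs x = Blinfun (\<lambda>y. blinfun_apply zs (f x y))"

definition flip :: "('x \<Rightarrow> 'y \<Rightarrow> 'z) \<Rightarrow> 'y \<Rightarrow> 'x \<Rightarrow> 'z" where
  "flip f y x = f x y"

definition ladj :: "('a::real_normed_vector \<Rightarrow> 'b::real_normed_vector)
    \<Rightarrow> ('b \<Rightarrow>\<^sub>L real) \<Rightarrow> ('a \<Rightarrow>\<^sub>L real)" where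
  "ladj T g = Blinfun (\<lambda>a. blinfun_apply g (T a))"

definition arens_regular :: "('x::real_normed_vector \<Rightarrow> 'y::real_normed_vector \<Rightarrow> 'z::real_normed_vector) \<Rightarrow> bool" where
  "arens_regular f \<longleftrightarrow> adj (adj (adj f)) = flip (adj (adj (adj (flip f))))"

definition weak_topology :: "'b::real_normed_vector topology" where
  "weak_topology = topology_generated_by
     {blinfun_apply f -` U | (f :: 'b \<Rightarrow>\<^sub>L real) U. open U}"

definition weakly_compact_op :: "('a::real_normed_vector \<Rightarrow> 'b::real_normed_vector) \<Rightarrow> bool" where
  "weakly_compact_op T \<longleftrightarrow> bounded_linear T \<and>
     compactin weak_topology (weak_topology closure_of (T ` cball 0 1))"

definition banach_module :: "('a::real_normed_algebra \<Rightarrow> 'x::real_normed_vector \<Rightarrow> 'x) \<Rightarrow> ('x \<Rightarrow> 'a \<Rightarrow> 'x) \<Rightarrow> bool" where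
  "banach_module p1 p2 \<longleftrightarrow> bounded_bilinear p1 \<and> bounded_bilinear p2 \<and>
     (\<forall>a b x. p1 (a * b) x = p1 a (p1 b x)) \<and>
     (\<forall>a b x. p2 x (a * b) = p2 (p2 x a) b) \<and>
     (\<forall>a b x. p1 a (p2 x b) = p2 (p1 a x) b)"

definition derivation :: "('a \<Rightarrow> 'a \<Rightarrow> 'a) \<Rightarrow> ('a \<Rightarrow> 'm \<Rightarrow> 'm) \<Rightarrow> ('m \<Rightarrow> 'a \<Rightarrow> 'm)
    \<Rightarrow> ('a::real_normed_vector \<Rightarrow> 'm::real_normed_vector) \<Rightarrow> bool" where
  "derivation m L R \<Delta> \<longleftrightarrow> bounded_linear \<Delta> \<and> (\<forall>a b. \<Delta> (m a b) = R (\<Delta> a) b + L a (\<Delta> b))"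

definition inner_derivation :: "('a \<Rightarrow> 'a \<Rightarrow> 'a) \<Rightarrow> ('a \<Rightarrow> 'm \<Rightarrow> 'm) \<Rightarrow> ('m \<Rightarrow> 'a \<Rightarrow> 'm)
    \<Rightarrow> ('a::real_normed_vector \<Rightarrow> 'm::real_normed_vector) \<Rightarrow> bool" where
  "inner_derivation m L R \<Delta> \<longleftrightarrow> derivation m L R \<Delta> \<and> (\<exists>\<xi>. \<forall>a. \<Delta> a = R \<xi> a - L a \<xi>)"

end

theory Submission
  imports Defs
begin

text \<open>Arens extensions of bounded bilinear maps preserve associativity identities, so
  \<open>X\<^sup>*\<^sup>*\<close> is a bimodule over \<open>(A\<^sup>*\<^sup>*, \<box>)\<close>, and, applied to the opposite module, over
  \<open>(A\<^sup>*\<^sup>*, \<lozenge>)\<close>; hence so are their duals \<open>X\<^sup>*\<^sup>*\<^sup>*\<close>. Dualising \<open>D = \<pi>\<^sub>1\<^sup>*(x\<^sup>*, -) - \<pi>\<^sub>2\<^sup>r\<^sup>*(x\<^sup>*, -)\<close>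
  twice gives \<open>D\<^sup>*\<^sup>* = \<pi>\<^sub>1\<^sup>*\<^sup>*\<^sup>*\<^sup>*(x\<^sup>*, -) - \<pi>\<^sub>2\<^sup>r\<^sup>*\<^sup>*\<^sup>*\<^sup>*(x\<^sup>*, -)\<close> with no hypotheses; Arens regularity of
  \<open>\<pi>\<^sub>1\<close> and \<open>\<pi>\<^sub>2\<close> turns each term into the required module action, and also shows that
  \<open>D\<^sup>*\<^sup>*\<close> takes values in the canonical image of \<open>X\<^sup>*\<close>. The latter gives weak compactness
  (Gantmacher): the image of the unit ball lies in the image of the pointwise-compact set of
  norm-one functionals on \<open>A\<^sup>*\<close> under a weakly continuous map.\<close>

declare plus_blinfun.rep_eq[simp] minus_blinfun.rep_eq[simp] scaleR_blinfun.rep_eq[simp]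
  uminus_blinfun.rep_eq[simp]

section \<open>Adjoints\<close>

lemma flip_apply [simp]: "flip f y x = f x y"
  by (simp add: flip_def)

lemma flip_flip [simp]: "flip (flip f) = f"
  by (simp add: flip_def fun_eq_iff)

lemma bounded_bilinear_flip [simp]: "bounded_bilinear f \<Longrightarrow> bounded_bilinear (flip f)"
  unfolding flip_def by (rule bounded_bilinear.flip)

lemma adj_apply [simp]:
  assumes "bounded_bilinear f"
  shows "blinfun_apply (adj f zs x) y = blinfun_apply zs (f x y)"
proof -
  have "bounded_linear (\<lambda>y. blinfun_apply zs (f x y))"
    using assms by (intro bounded_linear_compose[OF blinfun.bounded_linear_right]
        bounded_bilinear.bounded_linear_right)
  then show ?thesis
    unfolding adj_def by (simp add: bounded_linear_Blinfun_apply)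
qed

lemma bounded_bilinear_adj [simp]:
  assumes "bounded_bilinear f"
  shows "bounded_bilinear (adj f)"
proof -
  interpret f: bounded_bilinear f by fact
  obtain K where K: "\<And>x y. norm (f x y) \<le> norm x * norm y * K" "K > 0"
    using f.pos_bounded by (auto simp: ac_simps)
  show ?thesis
  proof
    fix a a' :: "'c \<Rightarrow>\<^sub>L real" and b b' and r :: real
    show "adj f (a + a') b = adj f a b + adj f a' b"
      by (rule blinfun_eqI) (simp add: assms)
    show "adj f a (b + b') = adj f a b + adj f a b'"
      by (rule blinfun_eqI) (simp add: assms f.add_left blinfun.add_right)
    show "adj f (r *\<^sub>R a) b = r *\<^sub>R adj f a b"
      by (rule blinfun_eqI) (simp add: assms)
    show "adj f a (r *\<^sub>R b) = r *\<^sub>R adj f a b"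
      by (rule blinfun_eqI) (simp add: assms f.scaleR_left blinfun.scaleR_right)
  next
    have "norm (adj f a b) \<le> norm a * norm b * K" for a :: "'c \<Rightarrow>\<^sub>L real" and b
    proof (rule norm_blinfun_bound)
      show "0 \<le> norm a * norm b * K"
        using K by simp
      fix y
      have "norm (blinfun_apply a (f b y)) \<le> norm a * norm (f b y)"
        by (rule norm_blinfun)
      also have "\<dots> \<le> norm a * (norm b * norm y * K)"
        by (rule mult_left_mono[OF K(1)]) simp
      finally show "norm (blinfun_apply (adj f a b) y) \<le> norm a * norm b * K * norm y"
        by (simp add: assms ac_simps)
    qed
    then show "\<exists>K. \<forall>a b. norm (adj f a b) \<le> norm a * norm b * K"
      by blast
  qed
qed

lemma ladj_apply [simp]:
  assumes "bounded_linear T"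
  shows "blinfun_apply (ladj T g) a = blinfun_apply g (T a)"
proof -
  have "bounded_linear (\<lambda>a. blinfun_apply g (T a))"
    using assms by (rule bounded_linear_compose[OF blinfun.bounded_linear_right])
  then show ?thesis
    unfolding ladj_def by (simp add: bounded_linear_Blinfun_apply)
qed

lemma bounded_linear_ladj [simp]:
  assumes "bounded_linear T"
  shows "bounded_linear (ladj T)"
proof -
  interpret T: bounded_linear T by fact
  obtain K where K: "\<And>x. norm (T x) \<le> norm x * K" "K > 0"
    using T.pos_bounded by auto
  show ?thesis
  proof (rule bounded_linear_intro[where K=K])
    fix g h :: "'b \<Rightarrow>\<^sub>L real" and r :: real
    show "ladj T (g + h) = ladj T g + ladj T h" "ladj T (r *\<^sub>R g) = r *\<^sub>R ladj T g"
      by (auto intro: blinfun_eqI simp: assms)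
    show "norm (ladj T g) \<le> norm g * K"
    proof (rule norm_blinfun_bound)
      show "0 \<le> norm g * K"
        using K by simp
      fix a
      have "norm (blinfun_apply g (T a)) \<le> norm g * norm (T a)"
        by (rule norm_blinfun)
      also have "\<dots> \<le> norm g * (norm a * K)"
        by (rule mult_left_mono[OF K(1)]) simp
      finally show "norm (blinfun_apply (ladj T g) a) \<le> norm g * K * norm a"
        by (simp add: assms ac_simps)
    qed
  qed
qed

lemma ladj_diff:
  assumes "bounded_linear S" "bounded_linear T"
  shows "ladj (\<lambda>a. S a - T a) g = ladj S g - ladj T g"
  by (rule blinfun_eqI) (simp add: assms bounded_linear_sub blinfun.diff_right)

lemma can_apply [simp]: "blinfun_apply (can x) f = blinfun_apply f x"
  unfolding can_def by (simp add: bounded_linear_Blinfun_apply blinfun.bounded_linear_left)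

lemma can_diff: "can (x - y) = can x - can y"
  by (rule blinfun_eqI) (simp add: blinfun.diff_right)

text \<open>On a dual space the canonical embedding is injective without Hahn--Banach: test against
  the canonical images of points.\<close>
lemma can_inject_dual:
  fixes w w' :: "'x::real_normed_vector \<Rightarrow>\<^sub>L real"
  assumes "can w = can w'"
  shows "w = w'"
proof (rule blinfun_eqI)
  fix x
  show "blinfun_apply w x = blinfun_apply w' x"
    using arg_cong[OF assms, of "\<lambda>\<Phi>. blinfun_apply \<Phi> (can x)"] by simp
qed

lemma ladj_ladj_can:
  assumes "bounded_linear T"
  shows "ladj (ladj T) (can a) = can (T a)"
  by (rule blinfun_eqI) (simp add: assms)

lemma ladj_adj:
  assumes "bounded_bilinear f"
  shows "ladj (adj f z) g = adj (adj f) g z"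
  by (rule blinfun_eqI) (simp add: assms bounded_bilinear.bounded_linear_right)

lemma ladj_ladj_adj:
  assumes "bounded_bilinear f"
  shows "ladj (ladj (adj f z)) y = adj (adj (adj (adj f))) (can z) y"
  by (rule blinfun_eqI) (simp add: assms ladj_adj bounded_bilinear.bounded_linear_right)

lemma adj_flip_adj3_can:
  assumes "bounded_bilinear f"
  shows "adj (flip (adj (adj (adj f)))) (can z) y = can (adj (adj f) y z)"
  by (rule blinfun_eqI) (simp add: assms)

lemma arens_regular_flip:
  assumes "arens_regular f"
  shows "flip (adj (adj (adj f))) = adj (adj (adj (flip f)))"
  using assms unfolding arens_regular_def by simp

section \<open>Arens extensions of bimodules\<close>

text \<open>Both sides are the iterated weak* limit in \<open>u\<close>, \<open>v\<close>, \<open>w\<close> (in this order) of the original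
  identity; algebraically one peels off one adjoint at a time.\<close>
lemma adj3_assoc:
  assumes "bounded_bilinear f\<^sub>1" "bounded_bilinear f\<^sub>2" "bounded_bilinear g\<^sub>1" "bounded_bilinear g\<^sub>2"
    and assoc: "\<And>u v w. f\<^sub>1 (f\<^sub>2 u v) w = g\<^sub>1 u (g\<^sub>2 v w)"
  shows "adj (adj (adj f\<^sub>1)) (adj (adj (adj f\<^sub>2)) u v) w
    = adj (adj (adj g\<^sub>1)) u (adj (adj (adj g\<^sub>2)) v w)"
proof -
  have 0: "adj f\<^sub>1 t (f\<^sub>2 u v) = adj g\<^sub>2 (adj g\<^sub>1 t u) v" for t u v
    by (rule blinfun_eqI) (simp add: assms)
  have 1: "adj f\<^sub>2 (adj (adj f\<^sub>1) w t) u = adj (adj g\<^sub>2) w (adj g\<^sub>1 t u)" for w t u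
    by (rule blinfun_eqI) (simp add: assms 0)
  have 2: "adj (adj f\<^sub>2) v (adj (adj f\<^sub>1) w t) = adj (adj g\<^sub>1) (adj (adj (adj g\<^sub>2)) v w) t" for v w t
    by (rule blinfun_eqI) (simp add: assms 1)
  show ?thesis
    by (rule blinfun_eqI) (simp add: assms 2)
qed

definition bimodule :: "('a::real_normed_vector \<Rightarrow> 'a \<Rightarrow> 'a) \<Rightarrow> ('a \<Rightarrow> 'x::real_normed_vector \<Rightarrow> 'x)
    \<Rightarrow> ('x \<Rightarrow> 'a \<Rightarrow> 'x) \<Rightarrow> bool" where
  "bimodule m l r \<longleftrightarrow> bounded_bilinear m \<and> bounded_bilinear l \<and> bounded_bilinear r \<and>
     (\<forall>a b x. l (m a b) x = l a (l b x)) \<and>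
     (\<forall>a b x. r x (m a b) = r (r x a) b) \<and>
     (\<forall>a b x. l a (r x b) = r (l a x) b)"

lemma banach_module_imp_bimodule: "banach_module p1 p2 \<Longrightarrow> bimodule (*) p1 p2"
  unfolding banach_module_def bimodule_def by (simp add: bounded_bilinear_mult)

lemma bimodule_opposite: "bimodule m l r \<Longrightarrow> bimodule (flip m) (flip r) (flip l)"
  unfolding bimodule_def by simp

lemma bimodule_arens:
  assumes "bimodule m l r"
  shows "bimodule (adj (adj (adj m))) (adj (adj (adj l))) (adj (adj (adj r)))"
  using assms unfolding bimodule_def
  by (auto intro!: adj3_assoc[symmetric] adj3_assoc)

lemma bimodule_dual:
  assumes "bimodule m l r"
  shows "bimodule m (flip (adj (flip r))) (adj l)"
  using assms unfolding bimodule_def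
  by (auto intro!: blinfun_eqI)

lemma inner_derivation_bimodule:
  assumes "bimodule m L R" and \<Delta>: "\<And>a. \<Delta> a = R \<xi> a - L a \<xi>"
  shows "inner_derivation m L R \<Delta>"
proof -
  interpret L: bounded_bilinear L
    using assms unfolding bimodule_def by blast
  interpret R: bounded_bilinear R
    using assms unfolding bimodule_def by blast
  have "bounded_linear \<Delta>"
    unfolding \<Delta>[abs_def] by (intro bounded_linear_sub R.bounded_linear_right L.bounded_linear_left)
  moreover have "\<Delta> (m a b) = R (\<Delta> a) b + L a (\<Delta> b)" for a b
    using assms unfolding bimodule_def by (simp add: \<Delta> R.diff_left L.diff_right)
  ultimately show ?thesis
    unfolding inner_derivation_def derivation_def using \<Delta> by blast
qed

section \<open>A criterion for weak compactness\<close>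

lemma topspace_weak_topology [simp]: "topspace (weak_topology :: 'b::real_normed_vector topology) = UNIV"
proof -
  have "UNIV \<in> {blinfun_apply f -` U | (f :: 'b \<Rightarrow>\<^sub>L real) U. open U}"
    by force
  then show ?thesis
    unfolding weak_topology_def topology_generated_by_topspace by blast
qed

lemma openin_weak_topology_vimage:
  fixes f :: "'b::real_normed_vector \<Rightarrow>\<^sub>L real"
  assumes "open U"
  shows "openin weak_topology (blinfun_apply f -` U)"
  unfolding weak_topology_def using assms by (intro topology_generated_by_Basis) blast

lemma continuous_map_weak_functional:
  fixes f :: "'b::real_normed_vector \<Rightarrow>\<^sub>L real"
  shows "continuous_map weak_topology euclideanreal (blinfun_apply f)"
  unfolding continuous_map_def
proof safe
  fix U assume "openin euclideanreal U"
  then have "openin weak_topology (blinfun_apply f -` U)"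
    by (simp add: openin_weak_topology_vimage)
  then show "openin weak_topology {x \<in> topspace weak_topology. blinfun_apply f x \<in> U}"
    by (simp add: vimage_def)
qed simp

lemma continuous_map_weak_topology_iff:
  "continuous_map X (weak_topology :: 'b::real_normed_vector topology) g \<longleftrightarrow>
     (\<forall>f :: 'b \<Rightarrow>\<^sub>L real. continuous_map X euclideanreal (\<lambda>x. blinfun_apply f (g x)))"
proof -
  have "continuous_map X euclideanreal (blinfun_apply f \<circ> g)"
    if "continuous_map X weak_topology g" for f :: "'b \<Rightarrow>\<^sub>L real"
    using that continuous_map_weak_functional[of f] by (rule continuous_map_compose)
  moreover have "continuous_map X weak_topology g"
    if cont: "\<forall>f :: 'b \<Rightarrow>\<^sub>L real. continuous_map X euclideanreal (\<lambda>x. blinfun_apply f (g x))"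
    unfolding weak_topology_def continuous_on_generated_topo_iff
  proof (intro conjI allI impI)
    fix U assume "U \<in> {blinfun_apply f -` V | (f :: 'b \<Rightarrow>\<^sub>L real) V. open V}"
    then obtain f :: "'b \<Rightarrow>\<^sub>L real" and V where U: "U = blinfun_apply f -` V" "open V"
      by blast
    have "openin X {x \<in> topspace X. blinfun_apply f (g x) \<in> V}"
      using openin_continuous_map_preimage[OF cont[rule_format, of f], of V] U by simp
    moreover have "g -` U \<inter> topspace X = {x \<in> topspace X. blinfun_apply f (g x) \<in> V}"
      using U by auto
    ultimately show "openin X (g -` U \<inter> topspace X)"
      by simp
  next
    show "g ` topspace X \<subseteq> \<Union> {blinfun_apply f -` V | (f :: 'b \<Rightarrow>\<^sub>L real) V. open V}"
      using topspace_weak_topology unfolding weak_topology_def topology_generated_by_topspace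
      by blast
  qed
  ultimately show ?thesis
    by (auto simp: o_def)
qed

lemma Hausdorff_weak_topology_dual:
  "Hausdorff_space (weak_topology :: ('x::real_normed_vector \<Rightarrow>\<^sub>L real) topology)"
  unfolding Hausdorff_space_def
proof (intro allI impI)
  fix u v :: "'x \<Rightarrow>\<^sub>L real"
  assume "u \<in> topspace weak_topology \<and> v \<in> topspace weak_topology \<and> u \<noteq> v"
  then obtain x where x: "blinfun_apply u x \<noteq> blinfun_apply v x"
    using blinfun_eqI by blast
  define d where "d = \<bar>blinfun_apply u x - blinfun_apply v x\<bar> / 2"
  have "d > 0"
    using x by (simp add: d_def)
  let ?U = "blinfun_apply (can x) -` ball (blinfun_apply u x) d"
  let ?V = "blinfun_apply (can x) -` ball (blinfun_apply v x) d"
  have "disjnt ?U ?V"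
    unfolding disjnt_def d_def by (auto simp: dist_real_def abs_if split: if_split_asm)
  then show "\<exists>U V. openin weak_topology U \<and> openin weak_topology V \<and> u \<in> U \<and> v \<in> V \<and> disjnt U V"
    using \<open>d > 0\<close> by (intro exI[of _ ?U] exI[of _ ?V]) (simp add: openin_weak_topology_vimage)
qed

definition unit_ball_functionals :: "('v::real_normed_vector \<Rightarrow> real) set" where
  "unit_ball_functionals = {\<phi>. (\<forall>f g. \<phi> (f + g) = \<phi> f + \<phi> g) \<and> (\<forall>r f. \<phi> (r *\<^sub>R f) = r * \<phi> f) \<and>
     (\<forall>f. \<bar>\<phi> f\<bar> \<le> norm f)}"

lemma unit_ball_functionals_bounded_linear:
  "\<phi> \<in> unit_ball_functionals \<Longrightarrow> bounded_linear \<phi>"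
  unfolding unit_ball_functionals_def by (intro bounded_linear_intro[where K=1]) auto

lemma evaluation_in_unit_ball_functionals:
  assumes "norm a \<le> 1"
  shows "(\<lambda>f. blinfun_apply f a) \<in> unit_ball_functionals"
proof -
  have "\<bar>blinfun_apply f a\<bar> \<le> norm f" for f
    using norm_blinfun[of f a] mult_left_mono[OF assms norm_ge_zero[of f]] by simp
  then show ?thesis
    unfolding unit_ball_functionals_def by (simp add: blinfun.add_left blinfun.scaleR_left)
qed

text \<open>Banach--Alaoglu, in the topology of pointwise convergence on all of \<open>V\<close>.\<close>
lemma compactin_unit_ball_functionals:
  "compactin (product_topology (\<lambda>_. euclideanreal) UNIV) (unit_ball_functionals :: ('v::real_normed_vector \<Rightarrow> real) set)"
proof -
  let ?P = "product_topology (\<lambda>_. euclideanreal) (UNIV :: 'v set)"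
  have proj: "continuous_map ?P euclideanreal (\<lambda>\<phi>. \<phi> f)" for f
    by (rule continuous_map_product_projection) simp
  have zero_set: "closedin ?P {\<phi>. g \<phi> = 0}" if "continuous_map ?P euclideanreal g" for g
    using closedin_continuous_map_preimage[OF that, of "{0}"] by (simp add: vimage_def)
  define S1 where "S1 p = {\<phi> :: 'v \<Rightarrow> real. \<phi> (fst p + snd p) - \<phi> (fst p) - \<phi> (snd p) = 0}" for p
  define S2 where "S2 p = {\<phi> :: 'v \<Rightarrow> real. \<phi> (fst p *\<^sub>R snd p) - fst p * \<phi> (snd p) = 0}" for p
  have "closedin ?P (S1 p)" "closedin ?P (S2 q)" for p q
    unfolding S1_def S2_def
    by (intro zero_set continuous_map_diff continuous_map_real_mult_left proj)+
  then have "closedin ?P (\<Inter> (range S1) \<inter> \<Inter> (range S2))"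
    by (intro closedin_Int closedin_Inter) auto
  moreover have "compactin ?P (PiE UNIV (\<lambda>f. cball 0 (norm f)))"
    by (simp add: compactin_PiE)
  ultimately have "compactin ?P (PiE UNIV (\<lambda>f. cball 0 (norm f)) \<inter> (\<Inter> (range S1) \<inter> \<Inter> (range S2)))"
    by (rule compact_Int_closedin[rotated])
  moreover have "PiE UNIV (\<lambda>f. cball 0 (norm f)) \<inter> (\<Inter> (range S1) \<inter> \<Inter> (range S2)) = unit_ball_functionals"
    unfolding unit_ball_functionals_def S1_def S2_def
    by (auto simp: dist_real_def diff_eq_eq add.commute)
  ultimately show ?thesis
    by simp
qed

text \<open>One direction of Gantmacher's theorem. The codomain is a dual space so that the weak
  topology is Hausdorff without Hahn--Banach.\<close>
lemma weakly_compact_op_if_bidual_range: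
  fixes T :: "'a::real_normed_vector \<Rightarrow> ('x::real_normed_vector \<Rightarrow>\<^sub>L real)"
  assumes T: "bounded_linear T" and range: "\<And>y. \<exists>w. ladj (ladj T) y = can w"
  shows "weakly_compact_op T"
proof -
  let ?P = "product_topology (\<lambda>_. euclideanreal) (UNIV :: ('a \<Rightarrow>\<^sub>L real) set)"
  let ?K = "unit_ball_functionals :: (('a \<Rightarrow>\<^sub>L real) \<Rightarrow> real) set"
  obtain E where E: "\<And>y. ladj (ladj T) y = can (E y)"
    using range by metis
  define \<Phi> where "\<Phi> \<phi> = E (Blinfun \<phi>)" for \<phi>
  have \<Phi>: "blinfun_apply F (\<Phi> \<phi>) = \<phi> (ladj T F)" if "\<phi> \<in> ?K" for \<phi> F
    using arg_cong[OF E[of "Blinfun \<phi>"], of "\<lambda>\<Psi>. blinfun_apply \<Psi> F"]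
      unit_ball_functionals_bounded_linear[OF that]
    by (simp add: \<Phi>_def T bounded_linear_Blinfun_apply)
  have "T ` cball 0 1 \<subseteq> \<Phi> ` ?K"
  proof
    fix y assume "y \<in> T ` cball 0 1"
    then obtain a where a: "norm a \<le> 1" "y = T a"
      by auto
    have "Blinfun (\<lambda>f. blinfun_apply f a) = can a"
      by (simp add: can_def)
    then have "\<Phi> (\<lambda>f. blinfun_apply f a) = y"
      using E[of "can a"] by (simp add: \<Phi>_def a ladj_ladj_can T can_inject_dual)
    then show "y \<in> \<Phi> ` ?K"
      using evaluation_in_unit_ball_functionals[OF a(1)] by blast
  qed
  moreover have "continuous_map (subtopology ?P ?K) weak_topology \<Phi>"
    unfolding continuous_map_weak_topology_iff
  proof
    fix F :: "('x \<Rightarrow>\<^sub>L real) \<Rightarrow>\<^sub>L real"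
    have "continuous_map (subtopology ?P ?K) euclideanreal (\<lambda>\<phi>. \<phi> (ladj T F))"
      by (intro continuous_map_from_subtopology continuous_map_product_projection) simp
    then show "continuous_map (subtopology ?P ?K) euclideanreal (\<lambda>\<phi>. blinfun_apply F (\<Phi> \<phi>))"
      by (rule continuous_map_eq) (simp add: \<Phi>)
  qed
  then have "compactin weak_topology (\<Phi> ` ?K)"
    by (rule image_compactin[rotated])
      (simp add: compactin_subtopology compactin_unit_ball_functionals)
  ultimately have "compactin weak_topology (weak_topology closure_of (T ` cball 0 1))"
    by (meson closed_compactin closedin_closure_of closure_of_minimal compactin_imp_closedin
        Hausdorff_weak_topology_dual)
  then show ?thesis
    unfolding weakly_compact_op_def using T by simp
qed

section \<open>The second adjoint of an inner derivation\<close>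

lemma ladj_ladj_inner_derivation:
  assumes "bounded_bilinear l" "bounded_bilinear r"
  shows "ladj (ladj (\<lambda>a. adj l z a - adj (flip r) z a)) y
    = adj (adj (adj (adj l))) (can z) y - adj (adj (adj (adj (flip r)))) (can z) y"
proof -
  have bl: "bounded_linear (adj l z)" "bounded_linear (adj (flip r) z)"
    using assms by (simp_all add: bounded_bilinear.bounded_linear_right)
  have "ladj (\<lambda>a. adj l z a - adj (flip r) z a) = (\<lambda>g. ladj (adj l z) g - ladj (adj (flip r) z) g)"
    using bl by (simp add: ladj_diff fun_eq_iff)
  then show ?thesis
    using bl assms by (simp add: ladj_diff ladj_ladj_adj)
qed

theorem proposition4p6:
  fixes p1 :: "'a::{real_normed_algebra,banach} \<Rightarrow> 'x::banach \<Rightarrow> 'x"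
    and p2 :: "'x \<Rightarrow> 'a \<Rightarrow> 'x"
    and D :: "'a \<Rightarrow> ('x \<Rightarrow>\<^sub>L real)"
    and xs :: "'x \<Rightarrow>\<^sub>L real"
  assumes "banach_module p1 p2"
    and "arens_regular p1" and "arens_regular p2"
    and "\<forall>a. D a = adj p1 xs a - flip (adj (flip p2)) a xs"
  shows "weakly_compact_op D \<and>
         inner_derivation (adj (adj (adj ((*) :: 'a \<Rightarrow> 'a \<Rightarrow> 'a))))
           (flip (adj (flip (adj (adj (adj p2)))))) (adj (adj (adj (adj p1))))
           (ladj (ladj D)) \<and>
         inner_derivation (flip (adj (adj (adj (flip ((*) :: 'a \<Rightarrow> 'a \<Rightarrow> 'a))))))
           (flip (adj (adj (adj (adj (flip p2)))))) (adj (flip (adj (adj (adj (flip p1))))))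
           (ladj (ladj D)) \<and>
         (\<forall>a2. ladj (ladj D) a2
            = adj (adj (adj (adj p1))) (can xs) a2 - flip (adj (flip (adj (adj (adj p2))))) a2 (can xs)) \<and>
         (\<forall>a2. ladj (ladj D) a2
            = adj (flip (adj (adj (adj (flip p1))))) (can xs) a2 - flip (adj (adj (adj (adj (flip p2))))) a2 (can xs))"
proof -
  have bm: "bimodule (*) p1 p2"
    using assms(1) by (rule banach_module_imp_bimodule)
  then have p1: "bounded_bilinear p1" and p2: "bounded_bilinear p2"
    unfolding bimodule_def by auto
  have D: "D = (\<lambda>a. adj p1 xs a - adj (flip p2) xs a)"
    using assms(4) by auto
  have D2: "ladj (ladj D) y = adj (adj (adj (adj p1))) (can xs) y - adj (adj (adj (adj (flip p2)))) (can xs) y" for y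
    unfolding D using p1 p2 by (rule ladj_ladj_inner_derivation)
  have reg1: "adj (adj (adj p1)) = flip (adj (adj (adj (flip p1))))"
    using assms(2) unfolding arens_regular_def .
  have reg2: "flip (adj (adj (adj p2))) = adj (adj (adj (flip p2)))"
    using assms(3) by (rule arens_regular_flip)
  have box: "\<forall>y. ladj (ladj D) y
      = adj (adj (adj (adj p1))) (can xs) y - flip (adj (flip (adj (adj (adj p2))))) y (can xs)"
    by (simp add: D2 reg2)
  have lozenge: "\<forall>y. ladj (ladj D) y
      = adj (flip (adj (adj (adj (flip p1))))) (can xs) y - flip (adj (adj (adj (adj (flip p2))))) y (can xs)"
    by (simp add: D2 reg1[symmetric])
  have "ladj (ladj D) y = can (adj (adj (flip p1)) y xs - adj (adj p2) y xs)" for y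
    using D2 reg1 reg2[symmetric] by (simp add: p1 p2 adj_flip_adj3_can can_diff)
  moreover have "bounded_linear D"
    unfolding D by (intro bounded_linear_sub bounded_bilinear.bounded_linear_right
        bounded_bilinear_adj bounded_bilinear_flip p1 p2)
  ultimately have "weakly_compact_op D"
    by (intro weakly_compact_op_if_bidual_range) blast+
  moreover have "inner_derivation (adj (adj (adj (*))))
      (flip (adj (flip (adj (adj (adj p2)))))) (adj (adj (adj (adj p1)))) (ladj (ladj D))"
    using bimodule_dual[OF bimodule_arens[OF bm]] box by (intro inner_derivation_bimodule) auto
  \<comment> \<open>\<open>\<lozenge>\<close> is the opposite of the first Arens product of the opposite algebra.\<close>
  moreover have "inner_derivation (flip (adj (adj (adj (flip (*))))))
      (flip (adj (adj (adj (adj (flip p2)))))) (adj (flip (adj (adj (adj (flip p1)))))) (ladj (ladj D))"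
    using bimodule_dual[OF bimodule_opposite[OF bimodule_arens[OF bimodule_opposite[OF bm]]]] lozenge
    by (intro inner_derivation_bimodule) auto
  ultimately show ?thesis
    using box lozenge by blast
qed

end
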